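(* Let $q=p^k$ with $p$ prime, and let $s\ge1$ be an integer. Then the Hamming space $Q_{q^2s}^n$ contains at least $q^{\binom{n}{2}(1+o(1))}$ mutually nonequivalent topolinear MDS codes, as $n\to\infty$.
   Context: $Q_Q$ denotes an alphabet of size $Q$ and $Q_Q^n$ the Hamming space of $n$-tuples. An MDS code (code distance 2) of length $n$ is a set $M\subseteq Q_Q^n$ with $|M|=Q^{n-1}$ and any two distinct elements at Hamming distance at least $2$. Two sets are equivalent if one is mapped to the other by an isometry of the Hamming space (a composition of a coordinate permutation and an isotopism $\overline{x}\mapsto(\tau_1x_1,\dots,\tau_nx_n)$, $\tau_i$ permutations of the alphabet). $M$ is topolinear if the group of isotopisms mapping $M$ onto $M$ contains a subgroup of cardinality $|M|$ acting transitively on $M$. *)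

theory Defs
  imports Complex_Main "HOL-Library.FuncSet" "HOL-Combinatorics.Permutations"
    "HOL-Computational_Algebra.Primes"
begin

definition hamming_space :: "nat \<Rightarrow> nat \<Rightarrow> (nat \<Rightarrow> nat) set" where
  "hamming_space Q n = PiE {..<n} (\<lambda>_. {..<Q})"

definition hdist :: "nat \<Rightarrow> (nat \<Rightarrow> nat) \<Rightarrow> (nat \<Rightarrow> nat) \<Rightarrow> nat" where
  "hdist n x y = card {i \<in> {..<n}. x i \<noteq> y i}"

definition mds2 :: "nat \<Rightarrow> nat \<Rightarrow> (nat \<Rightarrow> nat) set \<Rightarrow> bool" where
  "mds2 Q n M \<longleftrightarrow> M \<subseteq> hamming_space Q n \<and> card M = Q ^ (n - 1) \<and>
     (\<forall>x\<in>M. \<forall>y\<in>M. x \<noteq> y \<longrightarrow> hdist n x y \<ge> 2)"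

definition isotopisms :: "nat \<Rightarrow> nat \<Rightarrow> (nat \<Rightarrow> nat \<Rightarrow> nat) set" where
  "isotopisms Q n = PiE {..<n} (\<lambda>_. {f. f permutes {..<Q}})"

definition iso_apply :: "nat \<Rightarrow> (nat \<Rightarrow> nat \<Rightarrow> nat) \<Rightarrow> (nat \<Rightarrow> nat) \<Rightarrow> (nat \<Rightarrow> nat)" where
  "iso_apply n \<tau> x = restrict (\<lambda>i. \<tau> i (x i)) {..<n}"

definition iso_comp :: "nat \<Rightarrow> (nat \<Rightarrow> nat \<Rightarrow> nat) \<Rightarrow> (nat \<Rightarrow> nat \<Rightarrow> nat) \<Rightarrow> (nat \<Rightarrow> nat \<Rightarrow> nat)" where
  "iso_comp n a b = restrict (\<lambda>i. a i \<circ> b i) {..<n}"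

definition iso_id :: "nat \<Rightarrow> (nat \<Rightarrow> nat \<Rightarrow> nat)" where
  "iso_id n = restrict (\<lambda>i. id) {..<n}"

definition iso_inv :: "nat \<Rightarrow> (nat \<Rightarrow> nat \<Rightarrow> nat) \<Rightarrow> (nat \<Rightarrow> nat \<Rightarrow> nat)" where
  "iso_inv n a = restrict (\<lambda>i. inv (a i)) {..<n}"

definition perm_apply :: "nat \<Rightarrow> (nat \<Rightarrow> nat) \<Rightarrow> (nat \<Rightarrow> nat) \<Rightarrow> (nat \<Rightarrow> nat)" where
  "perm_apply n \<sigma> x = restrict (\<lambda>i. x (\<sigma> i)) {..<n}"

text \<open>Equivalence: image under an isometry of the Hamming space
  (coordinate permutation composed with an isotopism).\<close>
definition equivalent :: "nat \<Rightarrow> nat \<Rightarrow> (nat \<Rightarrow> nat) set \<Rightarrow> (nat \<Rightarrow> nat) set \<Rightarrow> bool" where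
  "equivalent Q n M M' \<longleftrightarrow> (\<exists>\<sigma> \<tau>. \<sigma> permutes {..<n} \<and> \<tau> \<in> isotopisms Q n \<and>
      M' = (\<lambda>x. iso_apply n \<tau> (perm_apply n \<sigma> x)) ` M)"

definition topolinear :: "nat \<Rightarrow> nat \<Rightarrow> (nat \<Rightarrow> nat) set \<Rightarrow> bool" where
  "topolinear Q n M \<longleftrightarrow> (\<exists>H. H \<subseteq> isotopisms Q n \<and>
      (\<forall>\<tau>\<in>H. iso_apply n \<tau> ` M = M) \<and>
      iso_id n \<in> H \<and>
      (\<forall>a\<in>H. \<forall>b\<in>H. iso_comp n a b \<in> H) \<and>
      (\<forall>a\<in>H. iso_inv n a \<in> H) \<and>
      card H = card M \<and>
      (\<forall>x\<in>M. \<forall>y\<in>M. \<exists>\<tau>\<in>H. iso_apply n \<tau> x = y))"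

end

theory Submission
  imports Defs "HOL-Number_Theory.Cong" "HOL-Real_Asymp.Real_Asymp"
begin

text \<open>
  Write the alphabet of size \<open>q\<^sup>2 s = q m\<close> (\<open>m = q s\<close>) as \<open>\<int>\<^sub>m \<times> \<int>\<^sub>q\<close>. For weights \<open>\<lambda>\<^sub>j\<^sub>i \<in> \<int>\<^sub>q\<close>,
  \<open>0 \<le> i < j < N = n - 1\<close>, let \<open>C\<^sub>\<lambda>\<close> consist of the words \<open>((a\<^sub>0, b\<^sub>0), \<dots>, (a\<^sub>N, b\<^sub>N))\<close> with \<open>\<Sum> a\<^sub>i = 0\<close> in \<open>\<int>\<^sub>m\<close>
  and \<open>\<Sum> b\<^sub>i = \<Phi>\<^sub>\<lambda>(a) = \<Sum> \<lambda>\<^sub>j\<^sub>i a\<^sub>i a\<^sub>j\<close> in \<open>\<int>\<^sub>q\<close>, which makes sense because \<open>q\<close> divides \<open>m\<close>. Any \<open>n - 1\<close>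
  symbols of a codeword determine the remaining one, so \<open>C\<^sub>\<lambda>\<close> is an MDS code. As
  \<open>\<Phi>\<^sub>\<lambda>(a + a') - \<Phi>\<^sub>\<lambda>(a) - \<Phi>\<^sub>\<lambda>(a')\<close> is bilinear, \<open>C\<^sub>\<lambda>\<close> is a group under a Heisenberg-type law in
  which left multiplication by a codeword acts coordinatewise, i.e. by an isotopism, so \<open>C\<^sub>\<lambda>\<close> is
  topolinear. Distinct weights give distinct codes, \<open>q\<^bsup>(n-1 choose 2)\<^esup>\<close> of them, and a code is
  equivalent (in either direction) to at most \<open>2 n! (q\<^sup>2 s)!\<^sup>n\<close> subsets of the Hamming space. A
  maximal family of pairwise inequivalent codes therefore has at least
  \<open>q\<^bsup>(n-1 choose 2)\<^esup> / (2 n! (q\<^sup>2 s)!\<^sup>n + 1) = q\<^bsup>(n choose 2)(1 + o(1))\<^esup>\<close> members.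
\<close>

section \<open>Hamming space, isotopisms and MDS codes\<close>

lemma hamming_space_iff:
  "x \<in> hamming_space Q n \<longleftrightarrow> (\<forall>i<n. x i < Q) \<and> (\<forall>i\<ge>n. x i = undefined)"
  unfolding hamming_space_def PiE_def Pi_def extensional_def by auto

lemma finite_hamming_space: "finite (hamming_space Q n)"
  unfolding hamming_space_def by (simp add: finite_PiE)

lemma card_hamming_space: "card (hamming_space Q n) = Q ^ n"
  unfolding hamming_space_def by (simp add: card_PiE)

lemma hamming_space_eqI:
  assumes "x \<in> hamming_space Q n" "y \<in> hamming_space Q n" "\<And>i. i < n \<Longrightarrow> x i = y i"
  shows "x = y"
  using assms unfolding hamming_space_iff by (metis ext linorder_not_le)

lemma hdist_less_2_imp_agree_off:
  assumes "hdist n x y < 2" "0 < n"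
  obtains k where "k < n" "\<And>i. i < n \<Longrightarrow> i \<noteq> k \<Longrightarrow> x i = y i"
proof -
  let ?D = "{i \<in> {..<n}. x i \<noteq> y i}"
  have "\<forall>i\<in>?D. \<forall>j\<in>?D. i = j"
    using assms(1) card_le_Suc0_iff_eq[of ?D] by (simp add: hdist_def)
  then show ?thesis
    using that assms(2) by (cases "?D = {}") blast+
qed

lemma mds2I:
  assumes "M \<subseteq> hamming_space Q n" "card M = Q ^ (n - 1)" "0 < n"
    and "\<And>x y k. x \<in> M \<Longrightarrow> y \<in> M \<Longrightarrow> k < n \<Longrightarrow> (\<And>i. i < n \<Longrightarrow> i \<noteq> k \<Longrightarrow> x i = y i) \<Longrightarrow> x = y"
  shows "mds2 Q n M"
  unfolding mds2_def
proof (intro conjI ballI impI assms(1,2))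
  fix x y assume "x \<in> M" "y \<in> M" "x \<noteq> y"
  then show "2 \<le> hdist n x y"
    using hdist_less_2_imp_agree_off[of n x y] assms(3,4) by (metis not_le)
qed

lemma isotopisms_permutes: "\<tau> \<in> isotopisms Q n \<Longrightarrow> i < n \<Longrightarrow> \<tau> i permutes {..<Q}"
  unfolding isotopisms_def by (simp add: PiE_iff)

lemma isotopisms_undefined: "\<tau> \<in> isotopisms Q n \<Longrightarrow> n \<le> i \<Longrightarrow> \<tau> i = undefined"
  unfolding isotopisms_def by (simp add: PiE_iff extensional_def)

lemma isotopisms_eqI:
  assumes "\<tau> \<in> isotopisms Q n" "\<And>i. i < n \<Longrightarrow> \<tau> i = \<rho> i" "\<And>i. n \<le> i \<Longrightarrow> \<rho> i = undefined"
  shows "\<tau> = \<rho>"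
  using assms isotopisms_undefined by (metis ext not_le)

lemma iso_apply_iso_comp: "iso_apply n (iso_comp n a b) x = iso_apply n a (iso_apply n b x)"
  unfolding iso_apply_def iso_comp_def by (simp add: fun_eq_iff)

lemma iso_apply_iso_id: "x \<in> hamming_space Q n \<Longrightarrow> iso_apply n (iso_id n) x = x"
  by (rule hamming_space_eqI[where Q = Q and n = n]) (auto simp: iso_apply_def iso_id_def hamming_space_iff)

lemma inj_on_iso_apply:
  assumes "\<tau> \<in> isotopisms Q n"
  shows "inj_on (iso_apply n \<tau>) (hamming_space Q n)"
proof
  fix x y assume x: "x \<in> hamming_space Q n" and y: "y \<in> hamming_space Q n"
    and eq: "iso_apply n \<tau> x = iso_apply n \<tau> y"
  show "x = y"
  proof (rule hamming_space_eqI[OF x y])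
    fix i assume "i < n"
    then have "\<tau> i (x i) = \<tau> i (y i)" "inj (\<tau> i)"
      using fun_cong[OF eq, of i] permutes_inj isotopisms_permutes[OF assms]
      by (auto simp: iso_apply_def)
    then show "x i = y i" by (simp add: inj_eq)
  qed
qed

lemma iso_comp_idem_eq_iso_id:
  assumes "\<tau> \<in> isotopisms Q n" "iso_comp n \<tau> \<tau> = \<tau>"
  shows "\<tau> = iso_id n"
proof (rule isotopisms_eqI[OF assms(1)])
  fix i assume i: "i < n"
  show "\<tau> i = iso_id n i"
  proof
    fix y
    have "\<tau> i (\<tau> i y) = \<tau> i y"
      using fun_cong[OF fun_cong[OF assms(2), of i], of y] i by (simp add: iso_comp_def)
    then show "\<tau> i y = iso_id n i y"
      using permutes_inj[OF isotopisms_permutes[OF assms(1) i]] i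
      by (simp add: iso_id_def inj_eq)
  qed
qed (simp add: iso_id_def)

lemma iso_inv_eqI:
  assumes "\<sigma> \<in> isotopisms Q n" "\<tau> \<in> isotopisms Q n" "iso_comp n \<sigma> \<tau> = iso_id n"
  shows "iso_inv n \<sigma> = \<tau>"
proof (rule sym, rule isotopisms_eqI[OF assms(2)])
  fix i assume i: "i < n"
  show "\<tau> i = iso_inv n \<sigma> i"
  proof
    fix y
    have "\<sigma> i (\<tau> i y) = y"
      using fun_cong[OF fun_cong[OF assms(3), of i], of y] i by (simp add: iso_comp_def iso_id_def)
    then have "inv (\<sigma> i) y = \<tau> i y"
      by (simp add: permutes_inv_eq[OF isotopisms_permutes[OF assms(1) i]])
    then show "\<tau> i y = iso_inv n \<sigma> i y" using i by (simp add: iso_inv_def)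
  qed
qed (simp add: iso_inv_def)

text \<open>A code \<open>M\<close> with a group law \<open>c \<cdot> d = t c d\<close> and unit \<open>e\<close>, whose left multiplications \<open>t c\<close> are
  isotopisms. The left multiplications then form the regular subgroup required for topolinearity.\<close>
locale isotopic_group_code =
  fixes Q n :: nat and M :: "(nat \<Rightarrow> nat) set" and e :: "nat \<Rightarrow> nat"
    and t :: "(nat \<Rightarrow> nat) \<Rightarrow> nat \<Rightarrow> nat \<Rightarrow> nat"
  assumes finite: "finite M" and subset: "M \<subseteq> hamming_space Q n" and unit_mem: "e \<in> M"
    and iso: "\<And>c. c \<in> M \<Longrightarrow> t c \<in> isotopisms Q n"
    and unit: "\<And>c. c \<in> M \<Longrightarrow> iso_apply n (t c) e = c"
    and closed: "\<And>c x. c \<in> M \<Longrightarrow> x \<in> M \<Longrightarrow> iso_apply n (t c) x \<in> M"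
    and comp: "\<And>c d. c \<in> M \<Longrightarrow> d \<in> M \<Longrightarrow> iso_comp n (t c) (t d) = t (iso_apply n (t c) d)"
begin

lemma inj_on_translation: "c \<in> M \<Longrightarrow> inj_on (iso_apply n (t c)) M"
  using inj_on_iso_apply[OF iso] subset inj_on_subset by blast

lemma translation_image: "c \<in> M \<Longrightarrow> iso_apply n (t c) ` M = M"
  using endo_inj_surj[OF finite _ inj_on_translation] closed by blast

lemma translation_unit: "t e = iso_id n"
  using iso_comp_idem_eq_iso_id[OF iso[OF unit_mem]] comp[OF unit_mem unit_mem] unit[OF unit_mem] by simp

lemma right_inverse_ex: "c \<in> M \<Longrightarrow> \<exists>d\<in>M. iso_apply n (t c) d = e"
  using translation_image unit_mem by (metis imageE)

lemma iso_inv_translation: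
  assumes "c \<in> M" "d \<in> M" "iso_apply n (t c) d = e"
  shows "iso_inv n (t c) = t d"
  using iso_inv_eqI[OF iso[OF assms(1)] iso[OF assms(2)]] comp[OF assms(1,2)] assms(3) translation_unit
  by simp

lemma translations_transitive:
  assumes x: "x \<in> M" and y: "y \<in> M"
  shows "\<exists>\<tau>\<in>t ` M. iso_apply n \<tau> x = y"
proof -
  obtain d where d: "d \<in> M" "iso_apply n (t x) d = e" using right_inverse_ex[OF x] by blast
  have "iso_apply n (t x) (iso_apply n (t d) x) = iso_apply n (iso_id n) x"
    unfolding iso_apply_iso_comp[symmetric] comp[OF x d(1)] d(2) translation_unit ..
  also have "\<dots> = iso_apply n (t x) e"
    using iso_apply_iso_id x subset unit[OF x] by auto
  finally have "iso_apply n (t d) x = e"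
    using inj_onD[OF inj_on_translation[OF x]] closed[OF d(1) x] unit_mem by blast
  then have "iso_apply n (t (iso_apply n (t y) d)) x = y"
    unfolding comp[OF y d(1), symmetric] iso_apply_iso_comp by (simp add: unit[OF y])
  moreover have "t (iso_apply n (t y) d) \<in> t ` M" using closed[OF y d(1)] by simp
  ultimately show ?thesis by blast
qed

theorem topolinear: "topolinear Q n M"
  unfolding topolinear_def
proof (intro exI[of _ "t ` M"] conjI ballI)
  show "t ` M \<subseteq> isotopisms Q n" using iso by blast
  show "iso_id n \<in> t ` M" using translation_unit unit_mem by (metis image_eqI)
  have "inj_on t M" by (rule inj_onI) (metis unit)
  then show "card (t ` M) = card M" by (rule card_image)
  show "\<exists>\<tau>\<in>t ` M. iso_apply n \<tau> x = y" if "x \<in> M" "y \<in> M" for x y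
    using translations_transitive that .
next
  fix \<tau> assume "\<tau> \<in> t ` M"
  then obtain c where c: "c \<in> M" and \<tau>: "\<tau> = t c" by blast
  show "iso_apply n \<tau> ` M = M" using translation_image[OF c] \<tau> by simp
  obtain d where "d \<in> M" "iso_apply n (t c) d = e" using right_inverse_ex[OF c] by blast
  then show "iso_inv n \<tau> \<in> t ` M" using iso_inv_translation[OF c] \<tau> by simp
next
  fix \<sigma> \<tau> assume "\<sigma> \<in> t ` M" "\<tau> \<in> t ` M"
  then obtain c d where "c \<in> M" "d \<in> M" "\<sigma> = t c" "\<tau> = t d" by blast
  then show "iso_comp n \<sigma> \<tau> \<in> t ` M" using comp closed by simp
qed

end

section \<open>Counting equivalent codes\<close>

lemma finite_isotopisms: "finite (isotopisms Q n)"
  unfolding isotopisms_def by (intro finite_PiE) (auto simp: finite_permutations)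

lemma card_isotopisms: "card (isotopisms Q n) = fact Q ^ n"
  unfolding isotopisms_def by (simp add: card_PiE card_permutations)

lemma inj_on_isometry:
  assumes "\<sigma> permutes {..<n}" "\<tau> \<in> isotopisms Q n"
  shows "inj_on (\<lambda>x. iso_apply n \<tau> (perm_apply n \<sigma> x)) (hamming_space Q n)"
proof
  fix x y assume x: "x \<in> hamming_space Q n" and y: "y \<in> hamming_space Q n"
    and eq: "iso_apply n \<tau> (perm_apply n \<sigma> x) = iso_apply n \<tau> (perm_apply n \<sigma> y)"
  have "x (\<sigma> i) = y (\<sigma> i)" if "i < n" for i
  proof -
    have "\<tau> i (x (\<sigma> i)) = \<tau> i (y (\<sigma> i))"
      using fun_cong[OF eq, of i] that by (simp add: iso_apply_def perm_apply_def)
    then show ?thesis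
      using permutes_inj[OF isotopisms_permutes[OF assms(2) that]] by (simp add: inj_eq)
  qed
  then show "x = y"
    using hamming_space_eqI[OF x y] assms(1)
    by (metis lessThan_iff permutes_inverses(1) permutes_in_image)
qed

definition isometries :: "nat \<Rightarrow> nat \<Rightarrow> ((nat \<Rightarrow> nat) \<Rightarrow> nat \<Rightarrow> nat) set" where
  "isometries Q n = (\<lambda>(\<sigma>, \<tau>) x. iso_apply n \<tau> (perm_apply n \<sigma> x)) ` ({\<sigma>. \<sigma> permutes {..<n}} \<times> isotopisms Q n)"

lemma equivalent_iff_isometries: "equivalent Q n M M' \<longleftrightarrow> (\<exists>g\<in>isometries Q n. M' = g ` M)"
proof
  assume "equivalent Q n M M'"
  then obtain \<sigma> \<tau> where "\<sigma> permutes {..<n}" "\<tau> \<in> isotopisms Q n"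
    and "M' = (\<lambda>x. iso_apply n \<tau> (perm_apply n \<sigma> x)) ` M"
    unfolding equivalent_def by blast
  then show "\<exists>g\<in>isometries Q n. M' = g ` M"
    unfolding isometries_def by (intro bexI[OF _ image_eqI[where x = "(\<sigma>, \<tau>)"]]) simp_all
next
  assume "\<exists>g\<in>isometries Q n. M' = g ` M"
  then obtain \<sigma> \<tau> where "\<sigma> permutes {..<n}" "\<tau> \<in> isotopisms Q n"
    and "M' = (\<lambda>x. iso_apply n \<tau> (perm_apply n \<sigma> x)) ` M"
    unfolding isometries_def by (elim bexE imageE SigmaE) simp
  then show "equivalent Q n M M'" unfolding equivalent_def by blast
qed

lemma finite_isometries: "finite (isometries Q n)"
  unfolding isometries_def by (simp add: finite_permutations finite_isotopisms)

lemma card_isometries_le: "card (isometries Q n) \<le> fact n * fact Q ^ n"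
  unfolding isometries_def
  using card_image_le[of "{\<sigma>. \<sigma> permutes {..<n}} \<times> isotopisms Q n"]
  by (simp add: card_cartesian_product card_permutations card_isotopisms finite_permutations finite_isotopisms)

lemma inj_on_isometries: "g \<in> isometries Q n \<Longrightarrow> inj_on g (hamming_space Q n)"
  unfolding isometries_def using inj_on_isometry by (elim imageE) (simp split: prod.splits)

lemma equivalents_eq_image: "{M'. equivalent Q n M M'} = (\<lambda>g. g ` M) ` isometries Q n"
  unfolding equivalent_iff_isometries by (simp add: image_def)

lemma finite_equivalents: "finite {M'. equivalent Q n M M'}"
  unfolding equivalents_eq_image by (simp add: finite_isometries)

lemma card_equivalents_le: "card {M'. equivalent Q n M M'} \<le> fact n * fact Q ^ n"
  unfolding equivalents_eq_image using card_image_le[OF finite_isometries] card_isometries_le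
  by (rule le_trans)

lemma card_equivalent_to_le:
  "card {M' \<in> Pow (hamming_space Q n). equivalent Q n M' M} \<le> fact n * fact Q ^ n"
proof -
  have "{M' \<in> Pow (hamming_space Q n). equivalent Q n M' M}
      \<subseteq> (\<lambda>g. {x \<in> hamming_space Q n. g x \<in> M}) ` isometries Q n"
  proof
    fix M' assume "M' \<in> {M' \<in> Pow (hamming_space Q n). equivalent Q n M' M}"
    then have M': "M' \<subseteq> hamming_space Q n" and "equivalent Q n M' M" by simp_all
    then obtain g where g: "g \<in> isometries Q n" "M = g ` M'"
      unfolding equivalent_iff_isometries by blast
    have "M' = {x \<in> hamming_space Q n. g x \<in> M}"
    proof (intro equalityI subsetI CollectI conjI)
      fix x assume "x \<in> {x \<in> hamming_space Q n. g x \<in> M}"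
      then obtain y where "x \<in> hamming_space Q n" "y \<in> M'" "g x = g y" using g(2) by blast
      then show "x \<in> M'" using inj_onD[OF inj_on_isometries[OF g(1)]] M' by blast
    qed (use M' g(2) in blast)+
    then show "M' \<in> (\<lambda>g. {x \<in> hamming_space Q n. g x \<in> M}) ` isometries Q n"
      using g(1) by (rule image_eqI)
  qed
  from le_trans[OF surj_card_le[OF finite_isometries this] card_isometries_le]
  show ?thesis .
qed

lemma card_equivalence_nbhd_le:
  assumes "F \<subseteq> Pow (hamming_space Q n)"
  shows "card {M' \<in> F. equivalent Q n M M' \<or> equivalent Q n M' M \<or> M' = M} \<le> 2 * (fact n * fact Q ^ n) + 1"
proof -
  let ?A = "{M'. equivalent Q n M M'}"
  let ?B = "{M' \<in> Pow (hamming_space Q n). equivalent Q n M' M}"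
  have "{M' \<in> F. equivalent Q n M M' \<or> equivalent Q n M' M \<or> M' = M} \<subseteq> ?A \<union> ?B \<union> {M}"
    using assms by blast
  moreover have "finite (?A \<union> ?B \<union> {M})" by (simp add: finite_equivalents finite_hamming_space)
  ultimately have "card {M' \<in> F. equivalent Q n M M' \<or> equivalent Q n M' M \<or> M' = M} \<le> card (?A \<union> ?B \<union> {M})"
    by (rule card_mono[rotated])
  also have "\<dots> \<le> card ?A + card ?B + 1" using card_Un_le[of "?A \<union> ?B" "{M}"] card_Un_le[of ?A ?B] by simp
  also have "\<dots> \<le> 2 * (fact n * fact Q ^ n) + 1"
    unfolding mult_2 by (intro add_mono card_equivalents_le card_equivalent_to_le order_refl)
  finally show ?thesis .
qed

text \<open>A maximal independent set dominates, so the closed neighbourhoods of its members cover \<open>F\<close>.\<close>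
lemma large_independent_subset:
  assumes "finite F" and nbhd: "\<And>x. x \<in> F \<Longrightarrow> card {y \<in> F. R x y \<or> R y x \<or> y = x} \<le> K"
  shows "\<exists>S\<subseteq>F. (\<forall>x\<in>S. \<forall>y\<in>S. x \<noteq> y \<longrightarrow> \<not> R x y) \<and> card F \<le> K * card S"
proof -
  define I where "I = {S. S \<subseteq> F \<and> (\<forall>x\<in>S. \<forall>y\<in>S. x \<noteq> y \<longrightarrow> \<not> R x y)}"
  define N where "N x = {y \<in> F. R x y \<or> R y x \<or> y = x}" for x
  have "finite I" using \<open>finite F\<close> unfolding I_def by simp
  moreover have "{} \<in> I" unfolding I_def by simp
  ultimately obtain S where S: "S \<in> I" and maximal: "\<forall>S'\<in>I. S \<le> S' \<longrightarrow> S = S'"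
    using finite_has_maximal by blast
  have "F \<subseteq> (\<Union>x\<in>S. N x)"
  proof
    fix y assume y: "y \<in> F"
    show "y \<in> (\<Union>x\<in>S. N x)"
    proof (rule ccontr)
      assume "y \<notin> (\<Union>x\<in>S. N x)"
      then have "insert y S \<in> I" using S y unfolding I_def N_def by auto
      then have "y \<in> S" using maximal by blast
      then show False using \<open>y \<notin> (\<Union>x\<in>S. N x)\<close> y unfolding N_def by blast
    qed
  qed
  have "finite S" using S \<open>finite F\<close> finite_subset unfolding I_def by blast
  have "card F \<le> card (\<Union>x\<in>S. N x)"
    using \<open>F \<subseteq> _\<close> \<open>finite S\<close> by (intro card_mono) (simp_all add: N_def \<open>finite F\<close>)
  also have "\<dots> \<le> (\<Sum>x\<in>S. card (N x))" using card_UN_le[OF \<open>finite S\<close>] .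
  also have "\<dots> \<le> card S * K"
  proof -
    have "card (N x) \<le> K" if "x \<in> S" for x
      using nbhd S that unfolding I_def N_def by blast
    then show ?thesis using sum_bounded_above[of S "\<lambda>x. card (N x)" K] by simp
  qed
  finally have "card F \<le> K * card S" by (simp only: mult.commute)
  with S show ?thesis unfolding I_def by blast
qed

section \<open>A quadratic form and its polarization\<close>

lemma sum_lessThan_triangle_swap:
  "(\<Sum>j<N. \<Sum>i<j. g i j) = (\<Sum>i<N. \<Sum>j\<in>{Suc i..<N}. g i j :: 'a :: comm_monoid_add)"
proof (induction N)
  case (Suc N)
  have "(\<Sum>i<Suc N. \<Sum>j\<in>{Suc i..<Suc N}. g i j) = (\<Sum>i<N. (\<Sum>j\<in>{Suc i..<N}. g i j) + g i N)"
    by simp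
  with Suc show ?case by (simp add: sum.distrib)
qed simp

definition qform :: "nat \<Rightarrow> (nat \<times> nat \<Rightarrow> nat) \<Rightarrow> (nat \<Rightarrow> int) \<Rightarrow> int" where
  "qform N lam u = (\<Sum>j<N. \<Sum>i<j. int (lam (j, i)) * u i * u j)"

definition polar :: "nat \<Rightarrow> (nat \<times> nat \<Rightarrow> nat) \<Rightarrow> (nat \<Rightarrow> int) \<Rightarrow> nat \<Rightarrow> int" where
  "polar N lam v i = (if i < N then
     (\<Sum>j\<in>{Suc i..<N}. int (lam (j, i)) * v j) + (\<Sum>j<i. int (lam (i, j)) * v j) else 0)"

lemma qform_add:
  "qform N lam (\<lambda>i. u i + v i) = qform N lam u + qform N lam v + (\<Sum>i<N. polar N lam v i * u i)"
proof -
  have "(\<Sum>j<N. \<Sum>i<j. int (lam (j, i)) * (v j * u i + v i * u j))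
      = (\<Sum>i<N. \<Sum>j\<in>{Suc i..<N}. int (lam (j, i)) * v j * u i) + (\<Sum>i<N. \<Sum>j<i. int (lam (i, j)) * v j * u i)"
    by (simp add: distrib_left sum.distrib sum_lessThan_triangle_swap[of _ N] ac_simps)
  also have "\<dots> = (\<Sum>i<N. polar N lam v i * u i)"
    by (simp add: polar_def sum.distrib[symmetric] sum_distrib_right distrib_right)
  finally have cross: "(\<Sum>j<N. \<Sum>i<j. int (lam (j, i)) * (v j * u i + v i * u j)) = (\<Sum>i<N. polar N lam v i * u i)" .
  have "qform N lam (\<lambda>i. u i + v i)
      = qform N lam u + qform N lam v + (\<Sum>j<N. \<Sum>i<j. int (lam (j, i)) * (v j * u i + v i * u j))"
    by (simp add: qform_def sum.distrib[symmetric] algebra_simps)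
  then show ?thesis by (simp only: cross)
qed

lemma polar_add: "polar N lam (\<lambda>j. u j + v j) i = polar N lam u i + polar N lam v i"
  by (simp add: polar_def sum.distrib algebra_simps)

lemma qform_cong: "(\<And>j. j < N \<Longrightarrow> u j = v j) \<Longrightarrow> qform N lam u = qform N lam v"
  unfolding qform_def by (intro sum.cong) auto

lemma qform_cong_mod:
  "(\<And>j. j < N \<Longrightarrow> [u j = v j] (mod q)) \<Longrightarrow> [qform N lam u = qform N lam v] (mod q)"
  unfolding qform_def by (intro cong_sum cong_mult cong_refl) auto

lemma polar_cong_mod:
  "(\<And>j. j < N \<Longrightarrow> [u j = v j] (mod q)) \<Longrightarrow> [polar N lam u i = polar N lam v i] (mod q)"
  unfolding polar_def by (auto intro!: cong_add cong_sum cong_mult)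

lemma qform_indicator:
  assumes "i0 < j0" "j0 < N"
  shows "qform N lam (\<lambda>i. if i = i0 \<or> i = j0 then 1 else 0) = int (lam (j0, i0))"
proof -
  have "int (lam (j, i)) * (if i = i0 \<or> i = j0 then 1 else 0) * (if j = i0 \<or> j = j0 then 1 else 0)
      = (if j = j0 then if i = i0 then int (lam (j0, i0)) else 0 else 0)" if "i < j" for i j
    using assms that by auto
  moreover have "(\<Sum>i<j. if j = j0 then if i = i0 then int (lam (j0, i0)) else 0 else 0)
      = (if j = j0 then int (lam (j0, i0)) else 0)" for j
    using assms by simp
  ultimately show ?thesis using assms by (simp add: qform_def)
qed

lemma cong_sum_cancel_others:
  assumes "finite A" "k \<in> A" "\<And>i. i \<in> A \<Longrightarrow> i \<noteq> k \<Longrightarrow> f i = g i"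
    and "[sum f A = sum g A] (mod n)"
  shows "[f k = (g k :: int)] (mod n)"
proof -
  have "sum f (A - {k}) = sum g (A - {k})" using assms(3) by (intro sum.cong) auto
  then show ?thesis
    using assms(4) sum.remove[OF assms(1,2), of f] sum.remove[OF assms(1,2), of g]
    by (simp add: cong_add_rcancel)
qed

section \<open>The codes\<close>

text \<open>A symbol \<open>y < q * m\<close> is read as the pair \<open>(y mod m, y div m) \<in> \<int>\<^sub>m \<times> \<int>\<^sub>q\<close>; \<open>symbol\<close> encodes a
  pair given by integer representatives.\<close>
definition symbol :: "nat \<Rightarrow> nat \<Rightarrow> int \<Rightarrow> int \<Rightarrow> nat" where
  "symbol q m a b = nat (a mod int m) + m * nat (b mod int q)"

definition quadratic_code :: "nat \<Rightarrow> nat \<Rightarrow> nat \<Rightarrow> (nat \<times> nat \<Rightarrow> nat) \<Rightarrow> (nat \<Rightarrow> nat) set" where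
  "quadratic_code q m N lam = {x \<in> hamming_space (q * m) (Suc N).
     [(\<Sum>i<Suc N. int (x i mod m)) = 0] (mod int m) \<and>
     [(\<Sum>i<Suc N. int (x i div m)) = qform N lam (\<lambda>i. int (x i mod m))] (mod int q)}"

text \<open>Coordinate \<open>i\<close> of left multiplication by the codeword \<open>c\<close>: \<open>(a, b) \<mapsto> (a + a\<^sub>c, b + b\<^sub>c + \<beta>(a\<^sub>c, e\<^sub>i) a)\<close>,
  where \<open>\<beta>\<close> is the polarization of \<open>\<Phi>\<^sub>\<lambda>\<close>. Symbols outside the alphabet are fixed, as required of a
  permutation of \<open>{..<q * m}\<close>.\<close>
definition lmult :: "nat \<Rightarrow> nat \<Rightarrow> nat \<Rightarrow> (nat \<times> nat \<Rightarrow> nat) \<Rightarrow> (nat \<Rightarrow> nat) \<Rightarrow> nat \<Rightarrow> nat \<Rightarrow> nat" where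
  "lmult q m N lam c i y = (if y < q * m then
     symbol q m (int (y mod m) + int (c i mod m))
       (int (y div m) + int (c i div m) + polar N lam (\<lambda>j. int (c j mod m)) i * int (y mod m))
   else y)"

definition lmult_iso :: "nat \<Rightarrow> nat \<Rightarrow> nat \<Rightarrow> (nat \<times> nat \<Rightarrow> nat) \<Rightarrow> (nat \<Rightarrow> nat) \<Rightarrow> nat \<Rightarrow> nat \<Rightarrow> nat" where
  "lmult_iso q m N lam c = restrict (lmult q m N lam c) {..<Suc N}"

locale quadratic_code_setting =
  fixes q m N :: nat and lam :: "nat \<times> nat \<Rightarrow> nat"
  assumes q_dvd_m: "q dvd m" and m_pos: "0 < m"
begin

abbreviation lo :: "nat \<Rightarrow> int" where "lo y \<equiv> int (y mod m)"

abbreviation hi :: "nat \<Rightarrow> int" where "hi y \<equiv> int (y div m)"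

abbreviation C :: "(nat \<Rightarrow> nat) set" where "C \<equiv> quadratic_code q m N lam"

abbreviation HS :: "(nat \<Rightarrow> nat) set" where "HS \<equiv> hamming_space (q * m) (Suc N)"

abbreviation cmult :: "(nat \<Rightarrow> nat) \<Rightarrow> (nat \<Rightarrow> nat) \<Rightarrow> nat \<Rightarrow> nat" where
  "cmult c x \<equiv> iso_apply (Suc N) (lmult_iso q m N lam c) x"

abbreviation twist :: "(nat \<Rightarrow> nat) \<Rightarrow> nat \<Rightarrow> int" where
  "twist c \<equiv> polar N lam (\<lambda>j. lo (c j))"

lemma q_pos: "0 < q"
  using dvd_pos_nat[OF m_pos q_dvd_m] .

lemma cong_mod_m_imp_mod_q: "[a = b] (mod int m) \<Longrightarrow> [a = b] (mod int q)"
  using q_dvd_m by (simp add: cong_dvd_modulus)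

lemma symbol_lt: "symbol q m a b < q * m"
proof -
  have "nat (a mod int m) < m" "Suc (nat (b mod int q)) \<le> q"
    using m_pos q_pos by (simp_all add: nat_less_iff Suc_le_eq)
  moreover have "m * Suc (nat (b mod int q)) \<le> m * q" using calculation(2) by (rule mult_le_mono2)
  ultimately show ?thesis unfolding symbol_def by (simp add: mult.commute)
qed

lemma lo_symbol: "lo (symbol q m a b) = a mod int m"
  using m_pos by (simp add: symbol_def nat_less_iff)

lemma hi_symbol: "hi (symbol q m a b) = b mod int q"
  using m_pos q_pos by (simp add: symbol_def nat_less_iff)

lemma hi_lt: "y < q * m \<Longrightarrow> hi y < int q"
  by (simp add: less_mult_imp_div_less)

lemma lo_cong_imp_eq: "[lo y = lo y'] (mod int m) \<Longrightarrow> lo y = lo y'"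
  using m_pos by (intro cong_less_imp_eq_int) simp_all

lemma digits_cong_imp_eq:
  assumes "y < q * m" "y' < q * m" "[lo y = lo y'] (mod int m)" "[hi y = hi y'] (mod int q)"
  shows "y = y'"
proof -
  have "hi y = hi y'"
    using hi_lt[OF assms(1)] hi_lt[OF assms(2)] by (intro cong_less_imp_eq_int[OF _ _ _ _ assms(4)]) simp_all
  with lo_cong_imp_eq[OF assms(3)] have "y mod m = y' mod m" "y div m = y' div m" by simp_all
  then show ?thesis using div_mult_mod_eq by metis
qed

lemma symbol_eqI:
  assumes "y < q * m" "[lo y = a] (mod int m)" "[hi y = b] (mod int q)"
  shows "y = symbol q m a b"
  using assms by (intro digits_cong_imp_eq symbol_lt) (simp_all add: lo_symbol hi_symbol cong_def)

lemma lmult_eq: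
  "y < q * m \<Longrightarrow> lmult q m N lam c i y = symbol q m (lo y + lo (c i)) (hi y + hi (c i) + twist c i * lo y)"
  by (simp add: lmult_def)

lemma lmult_less: "y < q * m \<Longrightarrow> lmult q m N lam c i y < q * m"
  by (simp add: lmult_eq symbol_lt)

lemma lmult_lo: "y < q * m \<Longrightarrow> [lo (lmult q m N lam c i y) = lo y + lo (c i)] (mod int m)"
  by (simp add: lmult_eq lo_symbol cong_def)

lemma lmult_hi:
  "y < q * m \<Longrightarrow> [hi (lmult q m N lam c i y) = hi y + hi (c i) + twist c i * lo y] (mod int q)"
  by (simp add: lmult_eq hi_symbol cong_def)

lemma inj_on_lmult: "inj_on (lmult q m N lam c i) {..<q * m}"
proof
  fix y y' assume y: "y \<in> {..<q * m}" and y': "y' \<in> {..<q * m}"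
    and eq: "lmult q m N lam c i y = lmult q m N lam c i y'"
  have "[lo y + lo (c i) = lo (lmult q m N lam c i y)] (mod int m)"
    using cong_sym[OF lmult_lo] y by simp
  also have "[lo (lmult q m N lam c i y) = lo y' + lo (c i)] (mod int m)"
    using lmult_lo y' eq by simp
  finally have lo: "lo y = lo y'" by (intro lo_cong_imp_eq) (simp add: cong_add_rcancel)
  have "[hi y + hi (c i) + twist c i * lo y = hi (lmult q m N lam c i y)] (mod int q)"
    using cong_sym[OF lmult_hi] y by simp
  also have "[hi (lmult q m N lam c i y) = hi y' + hi (c i) + twist c i * lo y'] (mod int q)"
    using lmult_hi y' eq by simp
  finally have "[hi y = hi y'] (mod int q)" by (simp add: lo cong_add_rcancel)
  with lo y y' show "y = y'" by (intro digits_cong_imp_eq) simp_all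
qed

lemma lmult_permutes: "lmult q m N lam c i permutes {..<q * m}"
proof (rule bij_imp_permutes)
  have "lmult q m N lam c i ` {..<q * m} \<subseteq> {..<q * m}"
    using lmult_less by (simp add: image_subset_iff)
  then have "lmult q m N lam c i ` {..<q * m} = {..<q * m}"
    using inj_on_lmult by (intro endo_inj_surj) simp_all
  then show "bij_betw (lmult q m N lam c i) {..<q * m} {..<q * m}"
    using inj_on_lmult by (simp add: bij_betw_def)
next
  fix y assume "y \<notin> {..<q * m}"
  then show "lmult q m N lam c i y = y" by (simp add: lmult_def)
qed

lemma lmult_iso_isotopism: "lmult_iso q m N lam c \<in> isotopisms (q * m) (Suc N)"
  unfolding isotopisms_def lmult_iso_def using lmult_permutes by (simp add: PiE_iff)

lemma cmult_nth: "i < Suc N \<Longrightarrow> cmult c x i = lmult q m N lam c i (x i)"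
  by (simp add: iso_apply_def lmult_iso_def)

lemma cmult_in_HS: "x \<in> HS \<Longrightarrow> cmult c x \<in> HS"
  by (simp add: hamming_space_iff cmult_nth lmult_less) (simp add: iso_apply_def)

lemma cmult_lo: "x \<in> HS \<Longrightarrow> i < Suc N \<Longrightarrow> [lo (cmult c x i) = lo (x i) + lo (c i)] (mod int m)"
  by (simp add: cmult_nth lmult_lo hamming_space_iff)

lemma cmult_hi:
  "x \<in> HS \<Longrightarrow> i < Suc N \<Longrightarrow> [hi (cmult c x i) = hi (x i) + hi (c i) + twist c i * lo (x i)] (mod int q)"
  by (simp add: cmult_nth lmult_hi hamming_space_iff)

lemma twist_mult: "d \<in> HS \<Longrightarrow> [twist (cmult c d) i = twist d i + twist c i] (mod int q)"
proof -
  assume d: "d \<in> HS"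
  have "[twist (cmult c d) i = polar N lam (\<lambda>j. lo (d j) + lo (c j)) i] (mod int q)"
    using cmult_lo[OF d] by (intro polar_cong_mod cong_mod_m_imp_mod_q) simp
  then show ?thesis by (simp add: polar_add)
qed

lemma lmult_lmult:
  assumes c: "c \<in> HS" and d: "d \<in> HS" and i: "i < Suc N" and y: "y < q * m"
  shows "lmult q m N lam c i (lmult q m N lam d i y) = lmult q m N lam (cmult c d) i y"
proof -
  define s where "s = lmult q m N lam d i y"
  have s: "s < q * m" "[lo s = lo y + lo (d i)] (mod int m)"
    "[hi s = hi y + hi (d i) + twist d i * lo y] (mod int q)"
    using y by (simp_all add: s_def lmult_less lmult_lo lmult_hi)
  have "[lo (lmult q m N lam c i s) = lo s + lo (c i)] (mod int m)" using lmult_lo[OF s(1)] .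
  also have "[lo s + lo (c i) = lo y + (lo (d i) + lo (c i))] (mod int m)"
    using cong_add[OF s(2) cong_refl] by (simp add: add.assoc)
  also have "[lo y + (lo (d i) + lo (c i)) = lo y + lo (cmult c d i)] (mod int m)"
    using cong_sym[OF cmult_lo[OF d i]] by (intro cong_add cong_refl)
  finally have lo: "[lo (lmult q m N lam c i s) = lo y + lo (cmult c d i)] (mod int m)" .
  have "[hi (lmult q m N lam c i s) = hi s + hi (c i) + twist c i * lo s] (mod int q)"
    using lmult_hi[OF s(1)] .
  also have "[hi s + hi (c i) + twist c i * lo s
      = (hi y + hi (d i) + twist d i * lo y) + hi (c i) + twist c i * (lo y + lo (d i))] (mod int q)"
    using s(3) cong_mod_m_imp_mod_q[OF s(2)] by (intro cong_add cong_mult cong_refl)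
  also have "(hi y + hi (d i) + twist d i * lo y) + hi (c i) + twist c i * (lo y + lo (d i))
      = hi y + (hi (d i) + hi (c i) + twist c i * lo (d i)) + (twist d i + twist c i) * lo y"
    by (simp add: algebra_simps)
  also have "[hi y + (hi (d i) + hi (c i) + twist c i * lo (d i)) + (twist d i + twist c i) * lo y
      = hi y + hi (cmult c d i) + twist (cmult c d) i * lo y] (mod int q)"
    using cong_sym[OF cmult_hi[OF d i]] cong_sym[OF twist_mult[OF d]] by (intro cong_add cong_mult cong_refl)
  finally have hi: "[hi (lmult q m N lam c i s) = hi y + hi (cmult c d i) + twist (cmult c d) i * lo y] (mod int q)" .
  have "lmult q m N lam c i s = symbol q m (lo y + lo (cmult c d i)) (hi y + hi (cmult c d i) + twist (cmult c d) i * lo y)"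
    using lmult_less[OF s(1)] lo hi by (rule symbol_eqI)
  then show ?thesis using lmult_eq[OF y] by (simp add: s_def)
qed

lemma lmult_iso_comp:
  assumes "c \<in> HS" "d \<in> HS"
  shows "iso_comp (Suc N) (lmult_iso q m N lam c) (lmult_iso q m N lam d) = lmult_iso q m N lam (cmult c d)"
proof (intro ext)
  fix i y
  show "iso_comp (Suc N) (lmult_iso q m N lam c) (lmult_iso q m N lam d) i y = lmult_iso q m N lam (cmult c d) i y"
    using lmult_lmult[OF assms] by (cases "i < Suc N"; cases "y < q * m") (simp_all add: iso_comp_def lmult_iso_def lmult_def)
qed

definition zero :: "nat \<Rightarrow> nat" where "zero = restrict (\<lambda>_. 0) {..<Suc N}"

lemma code_subset: "C \<subseteq> HS"
  unfolding quadratic_code_def by blast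

lemma finite_code: "finite C"
  using finite_subset[OF code_subset finite_hamming_space] .

lemma zero_in_HS: "zero \<in> HS"
  using q_pos m_pos by (simp add: zero_def hamming_space_iff)

lemma zero_in_code: "zero \<in> C"
proof -
  have "qform N lam (\<lambda>i. lo (zero i)) = qform N lam (\<lambda>_. 0)" by (rule qform_cong) (simp add: zero_def)
  then show ?thesis
    using zero_in_HS by (simp add: quadratic_code_def zero_def qform_def)
qed

lemma code_lo_sum: "x \<in> C \<Longrightarrow> [(\<Sum>i<Suc N. lo (x i)) = 0] (mod int m)"
  unfolding quadratic_code_def by blast

lemma code_hi_sum: "x \<in> C \<Longrightarrow> [(\<Sum>i<Suc N. hi (x i)) = qform N lam (\<lambda>i. lo (x i))] (mod int q)"
  unfolding quadratic_code_def by blast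

lemma cmult_zero:
  assumes c: "c \<in> HS"
  shows "cmult c zero = c"
proof (rule hamming_space_eqI[OF cmult_in_HS[OF zero_in_HS] c])
  fix i assume i: "i < Suc N"
  have "c i < q * m" using c i by (simp add: hamming_space_iff)
  then have "c i = symbol q m (lo (zero i) + lo (c i)) (hi (zero i) + hi (c i) + twist c i * lo (zero i))"
    using i by (intro symbol_eqI) (simp_all add: zero_def)
  then show "cmult c zero i = c i" using i q_pos m_pos by (simp add: cmult_nth lmult_eq zero_def)
qed

lemma cmult_closed:
  assumes c: "c \<in> C" and x: "x \<in> C"
  shows "cmult c x \<in> C"
proof -
  have cH: "c \<in> HS" and xH: "x \<in> HS" using c x code_subset by blast+
  have "[(\<Sum>i<Suc N. lo (cmult c x i)) = (\<Sum>i<Suc N. lo (x i)) + (\<Sum>i<Suc N. lo (c i))] (mod int m)"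
    unfolding sum.distrib[symmetric] using cmult_lo[OF xH] by (intro cong_sum) simp
  also have "[(\<Sum>i<Suc N. lo (x i)) + (\<Sum>i<Suc N. lo (c i)) = 0 + 0] (mod int m)"
    using code_lo_sum[OF x] code_lo_sum[OF c] by (rule cong_add)
  finally have lo: "[(\<Sum>i<Suc N. lo (cmult c x i)) = 0] (mod int m)" by simp
  have "[(\<Sum>i<Suc N. hi (cmult c x i))
      = (\<Sum>i<Suc N. hi (x i)) + (\<Sum>i<Suc N. hi (c i)) + (\<Sum>i<Suc N. twist c i * lo (x i))] (mod int q)"
    unfolding sum.distrib[symmetric] using cmult_hi[OF xH] by (intro cong_sum) simp
  also have "[(\<Sum>i<Suc N. hi (x i)) + (\<Sum>i<Suc N. hi (c i)) + (\<Sum>i<Suc N. twist c i * lo (x i))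
      = qform N lam (\<lambda>i. lo (x i)) + qform N lam (\<lambda>i. lo (c i)) + (\<Sum>i<N. twist c i * lo (x i))] (mod int q)"
    using code_hi_sum[OF x] code_hi_sum[OF c] by (intro cong_add) (simp_all add: polar_def)
  also have "qform N lam (\<lambda>i. lo (x i)) + qform N lam (\<lambda>i. lo (c i)) + (\<Sum>i<N. twist c i * lo (x i))
      = qform N lam (\<lambda>i. lo (x i) + lo (c i))"
    by (rule qform_add[symmetric])
  also have "[qform N lam (\<lambda>i. lo (x i) + lo (c i)) = qform N lam (\<lambda>i. lo (cmult c x i))] (mod int q)"
    using cmult_lo[OF xH] by (intro qform_cong_mod cong_mod_m_imp_mod_q) (simp add: cong_sym_eq)
  finally have hi: "[(\<Sum>i<Suc N. hi (cmult c x i)) = qform N lam (\<lambda>i. lo (cmult c x i))] (mod int q)" .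
  show ?thesis using lo hi cmult_in_HS[OF xH] by (simp add: quadratic_code_def)
qed

theorem topolinear_code: "topolinear (q * m) (Suc N) C"
proof (rule isotopic_group_code.topolinear)
  show "isotopic_group_code (q * m) (Suc N) C zero (lmult_iso q m N lam)"
    using finite_code code_subset zero_in_code lmult_iso_isotopism
    by unfold_locales (use code_subset in \<open>auto intro: cmult_zero cmult_closed lmult_iso_comp\<close>)
qed

lemma code_eqI_off:
  assumes x: "x \<in> C" and y: "y \<in> C" and k: "k < Suc N"
    and eq: "\<And>i. i < Suc N \<Longrightarrow> i \<noteq> k \<Longrightarrow> x i = y i"
  shows "x = y"
proof (rule hamming_space_eqI)
  have lo_sum: "[(\<Sum>i<Suc N. lo (x i)) = (\<Sum>i<Suc N. lo (y i))] (mod int m)"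
    using cong_trans[OF code_lo_sum[OF x] cong_sym[OF code_lo_sum[OF y]]] .
  have "[lo (x k) = lo (y k)] (mod int m)"
    by (rule cong_sum_cancel_others[OF _ _ _ lo_sum]) (use k eq in auto)
  then have "lo (x k) = lo (y k)" by (rule lo_cong_imp_eq)
  then have lo: "lo (x i) = lo (y i)" if "i < Suc N" for i
    using eq that by (cases "i = k") auto
  have "[(\<Sum>i<Suc N. hi (x i)) = qform N lam (\<lambda>i. lo (x i))] (mod int q)" by (rule code_hi_sum[OF x])
  also have "qform N lam (\<lambda>i. lo (x i)) = qform N lam (\<lambda>i. lo (y i))" using lo by (intro qform_cong) simp
  also have "[qform N lam (\<lambda>i. lo (y i)) = (\<Sum>i<Suc N. hi (y i))] (mod int q)"
    by (rule cong_sym[OF code_hi_sum[OF y]])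
  finally have hi_sum: "[(\<Sum>i<Suc N. hi (x i)) = (\<Sum>i<Suc N. hi (y i))] (mod int q)" .
  have "[hi (x k) = hi (y k)] (mod int q)"
    by (rule cong_sum_cancel_others[OF _ _ _ hi_sum]) (use k eq in auto)
  then have "x k = y k"
    using x y k lo[OF k] code_subset by (intro digits_cong_imp_eq) (auto simp: hamming_space_iff)
  then show "x i = y i" if "i < Suc N" for i using eq that by (cases "i = k") auto
qed (use x y code_subset in blast)+

definition extend :: "(nat \<Rightarrow> nat) \<Rightarrow> nat \<Rightarrow> nat" where
  "extend u = u(N := symbol q m (- (\<Sum>i<N. lo (u i))) (qform N lam (\<lambda>i. lo (u i)) - (\<Sum>i<N. hi (u i))))"

lemma extend_nth: "i \<noteq> N \<Longrightarrow> extend u i = u i"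
  by (simp add: extend_def)

lemma extend_in_code:
  assumes u: "u \<in> hamming_space (q * m) N"
  shows "extend u \<in> C"
proof -
  define a where "a = - (\<Sum>i<N. lo (u i))"
  define b where "b = qform N lam (\<lambda>i. lo (u i)) - (\<Sum>i<N. hi (u i))"
  have ext: "extend u = u(N := symbol q m a b)" by (simp add: extend_def a_def b_def)
  have "extend u \<in> HS" using u symbol_lt by (auto simp: ext hamming_space_iff less_Suc_eq)
  moreover have "[(\<Sum>i<Suc N. lo (extend u i)) = 0] (mod int m)"
  proof -
    have "[(\<Sum>i<Suc N. lo (extend u i)) = (\<Sum>i<N. lo (u i)) + a] (mod int m)"
      by (simp add: ext lo_symbol cong_add_lcancel)
    then show ?thesis by (simp add: a_def)
  qed
  moreover have "[(\<Sum>i<Suc N. hi (extend u i)) = qform N lam (\<lambda>i. lo (extend u i))] (mod int q)"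
  proof -
    have "qform N lam (\<lambda>i. lo (extend u i)) = qform N lam (\<lambda>i. lo (u i))"
      by (rule qform_cong) (simp add: ext)
    then show ?thesis
      using cong_add_lcancel[of "\<Sum>i<N. hi (u i)" "b mod int q" b "int q"] by (simp add: ext hi_symbol b_def)
  qed
  ultimately show ?thesis by (simp add: quadratic_code_def)
qed

lemma restrict_extend: "u \<in> hamming_space (q * m) N \<Longrightarrow> restrict (extend u) {..<N} = u"
  by (auto simp: extend_def hamming_space_iff fun_eq_iff)

lemma restrict_in_hamming_space: "x \<in> C \<Longrightarrow> restrict x {..<N} \<in> hamming_space (q * m) N"
  using code_subset by (auto simp: hamming_space_iff)

lemma card_code: "card C = (q * m) ^ N"
proof -
  have "bij_betw (\<lambda>x. restrict x {..<N}) C (hamming_space (q * m) N)"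
  proof (rule bij_betw_byWitness[where f' = extend])
    show "\<forall>x\<in>C. extend (restrict x {..<N}) = x"
    proof
      fix x assume x: "x \<in> C"
      show "extend (restrict x {..<N}) = x"
        using extend_in_code[OF restrict_in_hamming_space[OF x]] x
        by (rule code_eqI_off[where k = N]) (simp_all add: extend_nth)
    qed
  qed (use restrict_extend extend_in_code restrict_in_hamming_space in auto)
  then show ?thesis by (simp add: bij_betw_same_card card_hamming_space)
qed

theorem mds2_code: "mds2 (q * m) (Suc N) C"
  by (rule mds2I[OF code_subset]) (auto simp: card_code intro: code_eqI_off)

end

definition lower_pairs :: "nat \<Rightarrow> (nat \<times> nat) set" where
  "lower_pairs N = (SIGMA j:{..<N}. {..<j})"

definition weight_maps :: "nat \<Rightarrow> nat \<Rightarrow> (nat \<times> nat \<Rightarrow> nat) set" where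
  "weight_maps q N = PiE (lower_pairs N) (\<lambda>_. {..<q})"

lemma finite_lower_pairs: "finite (lower_pairs N)"
  unfolding lower_pairs_def by simp

lemma card_lower_pairs: "card (lower_pairs N) = N choose 2"
proof (induction N)
  case (Suc N)
  have "lower_pairs (Suc N) = lower_pairs N \<union> {N} \<times> {..<N}"
    unfolding lower_pairs_def by (auto simp: less_Suc_eq)
  moreover have "lower_pairs N \<inter> {N} \<times> {..<N} = {}" unfolding lower_pairs_def by auto
  ultimately have "card (lower_pairs (Suc N)) = card (lower_pairs N) + N"
    by (simp add: card_Un_disjoint finite_lower_pairs card_cartesian_product)
  then show ?case using Suc by (simp add: numeral_2_eq_2)
qed (simp add: lower_pairs_def)

lemma finite_weight_maps: "finite (weight_maps q N)"
  unfolding weight_maps_def by (simp add: finite_PiE finite_lower_pairs)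

lemma card_weight_maps: "card (weight_maps q N) = q ^ (N choose 2)"
  unfolding weight_maps_def by (simp add: card_PiE finite_lower_pairs card_lower_pairs)

lemma (in quadratic_code_setting) quadratic_code_eq_imp_weights_eq:
  assumes lam: "lam \<in> weight_maps q N" and mu: "mu \<in> weight_maps q N"
    and eq: "quadratic_code q m N mu = C"
  shows "mu = lam"
proof (rule ccontr)
  assume "mu \<noteq> lam"
  then obtain j0 i0 where p: "(j0, i0) \<in> lower_pairs N" and ne: "mu (j0, i0) \<noteq> lam (j0, i0)"
    using PiE_ext[of mu "lower_pairs N" "\<lambda>_. {..<q}" lam] lam mu unfolding weight_maps_def by fast
  have ij: "i0 < j0" "j0 < N" using p by (auto simp: lower_pairs_def)
  have less_q: "mu (j0, i0) < q" "lam (j0, i0) < q" using lam mu p by (auto simp: weight_maps_def)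
  then have "1 < m" using ne dvd_imp_le[OF q_dvd_m m_pos] by linarith
  define ind where "ind = (\<lambda>i::nat. if i = i0 \<or> i = j0 then 1 else 0 :: nat)"
  define u where "u = restrict ind {..<N}"
  have "m \<le> q * m" using q_pos by simp
  with \<open>1 < m\<close> have "1 < q * m" by linarith
  then have "u \<in> hamming_space (q * m) N" using q_pos m_pos by (simp add: u_def ind_def hamming_space_iff)
  then have x: "extend u \<in> quadratic_code q m N mu" "extend u \<in> C" using extend_in_code eq by simp_all
  have qf: "qform N w (\<lambda>i. lo (extend u i)) = int (w (j0, i0))" for w
  proof -
    have "qform N w (\<lambda>i. lo (extend u i)) = qform N w (\<lambda>i. if i = i0 \<or> i = j0 then 1 else 0)"
      using \<open>1 < m\<close> by (intro qform_cong) (simp add: extend_nth u_def ind_def)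
    then show ?thesis using qform_indicator[OF ij] by simp
  qed
  have "[(\<Sum>i<Suc N. hi (extend u i)) = qform N mu (\<lambda>i. lo (extend u i))] (mod int q)"
    using x(1) unfolding quadratic_code_def by blast
  then have "[(\<Sum>i<Suc N. hi (extend u i)) = int (mu (j0, i0))] (mod int q)"
    unfolding qf .
  moreover have "[(\<Sum>i<Suc N. hi (extend u i)) = int (lam (j0, i0))] (mod int q)"
    using code_hi_sum[OF x(2)] unfolding qf .
  ultimately have "[int (mu (j0, i0)) = int (lam (j0, i0))] (mod int q)"
    using cong_trans cong_sym by blast
  then show False using ne less_q by (simp add: cong_int_iff cong_less_imp_eq_nat)
qed

theorem many_inequivalent_topolinear_mds_codes:
  assumes "q dvd m" "0 < m"
  shows "\<exists>S. (\<forall>M\<in>S. mds2 (q * m) (Suc N) M \<and> topolinear (q * m) (Suc N) M) \<and>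
    (\<forall>M\<in>S. \<forall>M'\<in>S. M \<noteq> M' \<longrightarrow> \<not> equivalent (q * m) (Suc N) M M') \<and>
    q ^ (N choose 2) \<le> (2 * (fact (Suc N) * fact (q * m) ^ Suc N) + 1) * card S"
proof -
  define F where "F = quadratic_code q m N ` weight_maps q N"
  define K :: nat where "K = fact (Suc N) * fact (q * m) ^ Suc N"
  have good: "mds2 (q * m) (Suc N) M \<and> topolinear (q * m) (Suc N) M \<and> M \<subseteq> hamming_space (q * m) (Suc N)"
    if "M \<in> F" for M
  proof -
    obtain lam where M: "M = quadratic_code q m N lam" using \<open>M \<in> F\<close> unfolding F_def by blast
    interpret quadratic_code_setting q m N lam using assms by unfold_locales
    show ?thesis using mds2_code topolinear_code code_subset unfolding M by blast
  qed
  have "inj_on (quadratic_code q m N) (weight_maps q N)"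
  proof (rule inj_onI)
    fix lam mu assume lam: "lam \<in> weight_maps q N" and mu: "mu \<in> weight_maps q N"
      and eq: "quadratic_code q m N lam = quadratic_code q m N mu"
    interpret quadratic_code_setting q m N mu using assms by unfold_locales
    show "lam = mu" using quadratic_code_eq_imp_weights_eq[OF mu lam eq] .
  qed
  then have card_F: "card F = q ^ (N choose 2)"
    unfolding F_def by (simp add: card_image card_weight_maps)
  have "\<exists>S\<subseteq>F. (\<forall>M\<in>S. \<forall>M'\<in>S. M \<noteq> M' \<longrightarrow> \<not> equivalent (q * m) (Suc N) M M') \<and> card F \<le> (2 * K + 1) * card S"
  proof (rule large_independent_subset)
    show "finite F" unfolding F_def by (simp add: finite_weight_maps)
    show "card {M' \<in> F. equivalent (q * m) (Suc N) M M' \<or> equivalent (q * m) (Suc N) M' M \<or> M' = M} \<le> 2 * K + 1"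
      for M using good unfolding K_def by (intro card_equivalence_nbhd_le) blast
  qed
  then obtain S where S: "S \<subseteq> F" "\<forall>M\<in>S. \<forall>M'\<in>S. M \<noteq> M' \<longrightarrow> \<not> equivalent (q * m) (Suc N) M M'"
    "card F \<le> (2 * K + 1) * card S" by blast
  show ?thesis
  proof (intro exI[of _ S] conjI)
    show "\<forall>M\<in>S. mds2 (q * m) (Suc N) M \<and> topolinear (q * m) (Suc N) M" using good S(1) by blast
    show "q ^ (N choose 2) \<le> (2 * (fact (Suc N) * fact (q * m) ^ Suc N) + 1) * card S"
      using S(3) card_F unfolding K_def by simp
  qed (fact S(2))
qed

section \<open>Asymptotics\<close>

lemma real_choose_two: "real (n choose 2) = real n * (real n - 1) / 2"
proof (induction n)
  case (Suc n)
  have "Suc n choose 2 = n + (n choose 2)" by (simp add: numeral_2_eq_2)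
  with Suc show ?case by (simp add: field_simps)
qed simp

lemma choose_two_pred: "1 \<le> n \<Longrightarrow> real (n - 1 choose 2) = real (n choose 2) - (real n - 1)"
  by (simp add: real_choose_two of_nat_diff field_simps)

lemma fact_times_power_bound:
  fixes c :: real
  assumes "1 \<le> c" "1 \<le> n"
  shows "2 * (fact n * c ^ n) + 1 \<le> 3 * (real n * c) ^ n"
proof -
  have "1 * 1 \<le> fact n * c ^ n" using assms(1) by (intro mult_mono) (simp_all add: one_le_power)
  then have "2 * (fact n * c ^ n) + 1 \<le> 3 * (fact n * c ^ n)" by simp
  also have "\<dots> \<le> 3 * (real n ^ n * c ^ n)"
    using fact_le_power[of n] assms(1) by (simp add: mult_right_mono)
  finally show ?thesis by (simp add: power_mult_distrib)
qed

lemma vanishing_exponent_correction: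
  fixes b c :: real
  assumes "1 < b" "1 \<le> c"
  obtains f :: "nat \<Rightarrow> real" where "f \<longlonglongrightarrow> 0"
    and "\<And>n. 2 \<le> n \<Longrightarrow> b powr (real (n choose 2) * (1 + f n)) \<le> b ^ (n - 1 choose 2) / (2 * (fact n * c ^ n) + 1)"
proof
  define L where "L = ln b"
  have L: "0 < L" using assms(1) by (simp add: L_def)
  define f where "f n = - (L * (real n - 1) + ln 3 + real n * (ln (real n) + ln c)) / (L * (real n * (real n - 1) / 2))" for n :: nat
  show "f \<longlonglongrightarrow> 0" unfolding f_def using L assms(2) by real_asymp
  fix n :: nat assume n: "2 \<le> n"
  have "real (n choose 2) * (1 + f n) = real (n - 1 choose 2) - ln (3 * (real n * c) ^ n) / L"
    using n L assms(2) by (simp add: f_def real_choose_two choose_two_pred ln_mult ln_realpow field_simps)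
  then have "b powr (real (n choose 2) * (1 + f n)) = b ^ (n - 1 choose 2) / (3 * (real n * c) ^ n)"
    using assms n by (simp add: powr_diff powr_realpow L_def powr_def[of b "ln _ / ln b"])
  also have "\<dots> \<le> b ^ (n - 1 choose 2) / (2 * (fact n * c ^ n) + 1)"
    using fact_times_power_bound[OF assms(2), of n] n assms
    by (intro divide_left_mono mult_pos_pos add_pos_pos) simp_all
  finally show "b powr (real (n choose 2) * (1 + f n)) \<le> b ^ (n - 1 choose 2) / (2 * (fact n * c ^ n) + 1)" .
qed

theorem many_inequivalent_topolinear_mds_codes_asymptotically:
  assumes "1 < q" "q dvd m" "0 < m"
  shows "\<exists>f :: nat \<Rightarrow> real. f \<longlonglongrightarrow> 0 \<and>
    (\<forall>\<^sub>F n in sequentially. \<exists>S. (\<forall>M\<in>S. mds2 (q * m) n M \<and> topolinear (q * m) n M) \<and>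
       (\<forall>M\<in>S. \<forall>M'\<in>S. M \<noteq> M' \<longrightarrow> \<not> equivalent (q * m) n M M') \<and>
       real (card S) \<ge> real q powr (real (n choose 2) * (1 + f n)))"
proof -
  define c :: real where "c = fact (q * m)"
  have "1 < real q" "1 \<le> c" using assms(1) by (simp_all add: c_def)
  then obtain f where f: "f \<longlonglongrightarrow> 0" and f_le: "\<And>n. 2 \<le> n \<Longrightarrow>
      real q powr (real (n choose 2) * (1 + f n)) \<le> real q ^ (n - 1 choose 2) / (2 * (fact n * c ^ n) + 1)"
    using vanishing_exponent_correction by blast
  have "\<exists>S. (\<forall>M\<in>S. mds2 (q * m) n M \<and> topolinear (q * m) n M) \<and>
      (\<forall>M\<in>S. \<forall>M'\<in>S. M \<noteq> M' \<longrightarrow> \<not> equivalent (q * m) n M M') \<and>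
      real (card S) \<ge> real q powr (real (n choose 2) * (1 + f n))" if n: "2 \<le> n" for n
  proof -
    obtain S where S: "\<forall>M\<in>S. mds2 (q * m) n M \<and> topolinear (q * m) n M"
      "\<forall>M\<in>S. \<forall>M'\<in>S. M \<noteq> M' \<longrightarrow> \<not> equivalent (q * m) n M M'"
      and count: "q ^ (n - 1 choose 2) \<le> (2 * (fact n * fact (q * m) ^ n) + 1) * card S"
      using many_inequivalent_topolinear_mds_codes[OF assms(2,3), of "n - 1"] n by auto
    have "real q ^ (n - 1 choose 2) \<le> real (card S) * (2 * (fact n * c ^ n) + 1)"
      using of_nat_mono[OF count, where 'a = real] by (simp add: c_def distrib_left add.commute mult.commute)
    then have "real q ^ (n - 1 choose 2) / (2 * (fact n * c ^ n) + 1) \<le> real (card S)"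
      using \<open>1 \<le> c\<close> by (simp add: pos_divide_le_eq add_pos_pos)
    with f_le[OF n] have "real q powr (real (n choose 2) * (1 + f n)) \<le> real (card S)"
      by (rule order_trans)
    with S show ?thesis by blast
  qed
  then have "\<forall>\<^sub>F n in sequentially. \<exists>S. (\<forall>M\<in>S. mds2 (q * m) n M \<and> topolinear (q * m) n M) \<and>
      (\<forall>M\<in>S. \<forall>M'\<in>S. M \<noteq> M' \<longrightarrow> \<not> equivalent (q * m) n M M') \<and>
      real (card S) \<ge> real q powr (real (n choose 2) * (1 + f n))"
    by (rule eventually_sequentiallyI)
  with f show ?thesis by blast
qed

theorem corollary3:
  fixes p k s :: nat
  assumes "prime p" and "k \<ge> 1" and "s \<ge> 1"
  shows "\<exists>f :: nat \<Rightarrow> real. f \<longlonglongrightarrow> 0 \<and>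
    (\<forall>\<^sub>F n in sequentially. \<exists>S.
       (\<forall>M\<in>S. mds2 ((p ^ k)\<^sup>2 * s) n M \<and> topolinear ((p ^ k)\<^sup>2 * s) n M) \<and>
       (\<forall>M\<in>S. \<forall>M'\<in>S. M \<noteq> M' \<longrightarrow> \<not> equivalent ((p ^ k)\<^sup>2 * s) n M M') \<and>
       real (card S) \<ge> real (p ^ k) powr (real (n choose 2) * (1 + f n)))"
proof -
  have q: "1 < p ^ k" using assms(2) by (intro one_less_power prime_gt_1_nat[OF assms(1)]) simp
  have m: "0 < p ^ k * s" using q assms(3) by (intro mult_pos_pos) linarith+
  have "(p ^ k)\<^sup>2 * s = p ^ k * (p ^ k * s)" by (simp add: power2_eq_square)
  then show ?thesis
    using many_inequivalent_topolinear_mds_codes_asymptotically[OF q dvd_triv_left m] by (simp only:)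
qed

end
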